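(* Let $d, m \geq 1$ be integers, let $\boldsymbol{H} \in \mathbb{R}^{d\times d}$ be a deterministic symmetric matrix, and let $\Phi$ denote the standard normal cumulative distribution function, with $q_{1-\delta} = \Phi^{-1}(1-\delta)$ for $\delta \in (0,1)$. Let $(F, \boldsymbol{G}) \in \mathbb{R}\times\mathbb{R}^d$ be jointly Gaussian with mean $(\mu_f, \boldsymbol{\mu}_{\nabla f})$ and covariance matrix $\begin{bmatrix} \sigma_f^2 & \boldsymbol{\Sigma}_{\nabla f,f}^\top \\ \boldsymbol{\Sigma}_{\nabla f,f} & \boldsymbol{\Sigma}_{\nabla f}\end{bmatrix} = \boldsymbol{L}_f \boldsymbol{L}_f^\top$, where $\boldsymbol{L}_f \in \mathbb{R}^{(d+1)\times(d+1)}$. For each $i \in \{1,\dots,m\}$, let $(C_i, \boldsymbol{G}_i) \in \mathbb{R}\times\mathbb{R}^d$ be jointly Gaussian with mean $(\mu_{c_i}, \boldsymbol{\mu}_{\nabla c_i})$ and covariance matrix $\begin{bmatrix} \sigma_{c_i}^2 & \boldsymbol{\Sigma}_{\nabla c_i,c_i}^\top \\ \boldsymbol{\Sigma}_{\nabla c_i,c_i} & \boldsymbol{\Sigma}_{\nabla c_i}\end{bmatrix} = \boldsymbol{L}_{c_i} \boldsymbol{L}_{c_i}^\top$, where $\boldsymbol{L}_{c_i} \in \mathbb{R}^{(d+1)\times(d+1)}$. For $\delta_f, \delta_c \in (0,1)$, consider the following second-order cone program (B-SUB) in the variables $\boldsymbol{p} \in \mathbb{R}^d$, $b_f \in \mathbb{R}$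 and $b_{c_1},\dots,b_{c_m} \in \mathbb{R}$: $$\min \ \tfrac12 \boldsymbol{p}^\top \boldsymbol{H}\boldsymbol{p} + \boldsymbol{\mu}_{\nabla f}^\top \boldsymbol{p} + \mu_f + q_{1-\delta_f} b_f$$ subject to $$\Big\|\boldsymbol{L}_f^\top \begin{bmatrix}1\\ \boldsymbol{p}\end{bmatrix}\Big\|_2 \le b_f, \qquad \Big\|\boldsymbol{L}_{c_i}^\top \begin{bmatrix}1\\ \boldsymbol{p}\end{bmatrix}\Big\|_2 \le b_{c_i}, \qquad -\boldsymbol{\mu}_{\nabla c_i}^\top \boldsymbol{p} + q_{1-\delta_c} b_{c_i} \le \mu_{c_i}$$ for all $i \in \{1,\dots,m\}$. Consider also the expected-value subproblem in the variable $\boldsymbol{p} \in \mathbb{R}^d$: $$\min_{\boldsymbol{p}} \ \mathbb{E}\big[\tfrac12 \boldsymbol{p}^\top\boldsymbol{H}\boldsymbol{p} + \boldsymbol{G}^\top \boldsymbol{p} + F\big]$$ subject to $$\mathbb{E}\big[C_i + \boldsymbol{G}_i^\top \boldsymbol{p}\big] \ge 0 \quad \text{for all } i\in\{1,\dots,m\}.$$ Then, for $\delta_f = 0.5$ and $\delta_c = 0.5$, the search-direction solutions of the two problems coincide: a vector $\boldsymbol{p}$ is the $\boldsymbol{p}$-component of an optimal solution of B-SUB if and only if $\boldsymbol{p}$ is an optimal solution of the expected-value subproblem.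
   Context: This result arises in a Bayesian sequential quadratic programming method. At the current iterate $\boldsymbol{x}_t$, Gaussian process posteriors give jointly Gaussian distributions for the objective value and gradient $(f(\boldsymbol{x}_t), \nabla f(\boldsymbol{x}_t))$ and for each constraint value and gradient $(c_i(\boldsymbol{x}_t), \nabla c_i(\boldsymbol{x}_t))$, with the means and covariances stated in the claim. The matrix $\boldsymbol{H}$ is a deterministic approximation of the Hessian of the Lagrangian. B-SUB is the tractable reformulation of an uncertainty-aware subproblem. In that subproblem the objective is replaced by its value-at-risk at level $1-\delta_f$, and each linearized constraint is required to hold with probability at least $1-\delta_c$. *)

theory Defs
  imports "HOL-Probability.Probability"
begin

text \<open>Vectors in R^n are encoded as functions nat => real that vanish outside {..<n};
  matrices as nat => nat => real, only entries with indices below the size matter.\<close>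

definition vecs :: "nat \<Rightarrow> (nat \<Rightarrow> real) set" where
  "vecs n = {p. \<forall>k\<ge>n. p k = 0}"

definition Phi :: "real \<Rightarrow> real" where
  "Phi x = measure (density lborel std_normal_density) {..x}"

definition qnorm :: "real \<Rightarrow> real" where
  "qnorm a = (THE x. Phi x = a)"

definition normLT :: "nat \<Rightarrow> (nat \<Rightarrow> nat \<Rightarrow> real) \<Rightarrow> (nat \<Rightarrow> real) \<Rightarrow> real" where
  "normLT n L v = sqrt (\<Sum>j<n. (\<Sum>k<n. L k j * v k)\<^sup>2)"

definition one_p :: "(nat \<Rightarrow> real) \<Rightarrow> nat \<Rightarrow> real" where
  "one_p p k = (if k = 0 then 1 else p (k - 1))"

definition stack :: "('a \<Rightarrow> real) \<Rightarrow> (nat \<Rightarrow> 'a \<Rightarrow> real) \<Rightarrow> nat \<Rightarrow> 'a \<Rightarrow> real" where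
  "stack V W k = (if k = 0 then V else W (k - 1))"

definition stackv :: "real \<Rightarrow> (nat \<Rightarrow> real) \<Rightarrow> nat \<Rightarrow> real" where
  "stackv v w k = (if k = 0 then v else w (k - 1))"

text \<open>Jointly Gaussian random vector (X_0..X_{n-1}) with mean mu and covariance L L^T
  (possibly degenerate), characterised via all linear combinations (Cramer--Wold):
  each a^T X is normal with mean a^T mu and variance a^T L L^T a = |L^T a|^2,
  degenerate (a.s. constant) when that variance is zero.\<close>
definition gaussian_vec ::
  "'a measure \<Rightarrow> nat \<Rightarrow> (nat \<Rightarrow> 'a \<Rightarrow> real) \<Rightarrow> (nat \<Rightarrow> real) \<Rightarrow> (nat \<Rightarrow> nat \<Rightarrow> real) \<Rightarrow> bool" where
  "gaussian_vec M n X mu L \<longleftrightarrow>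
     (\<forall>k<n. X k \<in> borel_measurable M) \<and>
     (\<forall>a. let s = normLT n L a; c = (\<Sum>k<n. a k * mu k);
              Y = (\<lambda>\<omega>. \<Sum>k<n. a k * X k \<omega>) in
          (if s > 0 then distributed M lborel Y (normal_density c s)
           else (AE \<omega> in M. Y \<omega> = c)))"

definition quad :: "nat \<Rightarrow> (nat \<Rightarrow> nat \<Rightarrow> real) \<Rightarrow> (nat \<Rightarrow> real) \<Rightarrow> real" where
  "quad d H p = (\<Sum>i<d. \<Sum>j<d. p i * H i j * p j)"

definition dotv :: "nat \<Rightarrow> (nat \<Rightarrow> real) \<Rightarrow> (nat \<Rightarrow> real) \<Rightarrow> real" where
  "dotv d u v = (\<Sum>k<d. u k * v k)"

definition bsub_feasible where
  "bsub_feasible d m Lf Lc mu_c mu_gc dc p bf bc \<longleftrightarrow>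
     normLT (d+1) Lf (one_p p) \<le> bf \<and>
     (\<forall>i<m. normLT (d+1) (Lc i) (one_p p) \<le> bc i \<and>
            - dotv d (mu_gc i) p + qnorm (1 - dc) * bc i \<le> mu_c i)"

definition bsub_obj where
  "bsub_obj d H mu_f mu_gf df p bf =
     quad d H p / 2 + dotv d mu_gf p + mu_f + qnorm (1 - df) * bf"

definition bsub_opt_p where
  "bsub_opt_p d m H mu_f mu_gf Lf Lc mu_c mu_gc df dc p \<longleftrightarrow>
     (\<exists>bf bc. bsub_feasible d m Lf Lc mu_c mu_gc dc p bf bc \<and>
        (\<forall>p' \<in> vecs d. \<forall>bf' bc'. bsub_feasible d m Lf Lc mu_c mu_gc dc p' bf' bc' \<longrightarrow>
            bsub_obj d H mu_f mu_gf df p bf \<le> bsub_obj d H mu_f mu_gf df p' bf'))"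

definition ev_feasible where
  "ev_feasible M d m C Gc p \<longleftrightarrow>
     (\<forall>i<m. prob_space.expectation M (\<lambda>\<omega>. C i \<omega> + (\<Sum>k<d. Gc i k \<omega> * p k)) \<ge> 0)"

definition ev_obj where
  "ev_obj M d H F G p =
     prob_space.expectation M (\<lambda>\<omega>. quad d H p / 2 + (\<Sum>k<d. G k \<omega> * p k) + F \<omega>)"

definition ev_opt where
  "ev_opt M d m H F G C Gc p \<longleftrightarrow>
     ev_feasible M d m C Gc p \<and>
     (\<forall>p' \<in> vecs d. ev_feasible M d m C Gc p' \<longrightarrow> ev_obj M d H F G p \<le> ev_obj M d H F G p')"

end

theory Submission
  imports Defs
begin

(* At level 1/2 the normal quantile vanishes, since the standard normal law is symmetric and its
   CDF strictly increasing. Then the cone variables b_f, b_c occur in neither the objective nor the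
   linearised constraints of B-SUB, and can always be taken equal to the norms they bound; what is
   left is the problem with every random quantity replaced by its mean. The expected-value
   subproblem is the same problem, because each affine combination C + G^T p of a Gaussian vector
   is normal (or a.s. constant) with the corresponding mean. *)

abbreviation std_normal :: "real measure" where
  "std_normal \<equiv> density lborel std_normal_density"

lemma prob_space_std_normal: "prob_space std_normal"
  using prob_space_normal_density by simp

lemma AE_std_normal_iff: "(AE x in std_normal. P x) \<longleftrightarrow> (AE x in lborel. P x)"
  by (simp add: AE_density normal_density_pos)

lemma distr_std_normal_uminus: "distr std_normal borel uminus = std_normal"
proof -
  have "std_normal = density (distr lborel borel uminus) std_normal_density"
    by (simp add: lborel_distr_uminus)
  also have "\<dots> = distr (density lborel (\<lambda>x. std_normal_density (- x))) borel uminus"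
    by (rule density_distr) auto
  finally show ?thesis
    by (simp add: std_normal_density_def)
qed

lemma Phi_0: "Phi 0 = 1/2"
proof -
  interpret prob_space std_normal by (rule prob_space_std_normal)
  have "measure std_normal {..0} = measure (distr std_normal borel uminus) {..0}"
    by (simp add: distr_std_normal_uminus)
  also have "\<dots> = measure std_normal {0..}"
    by (subst measure_distr) (auto intro: arg_cong[where f = "measure _"])
  finally have sym: "measure std_normal {..0} = measure std_normal {0..}" .
  have "measure std_normal {0} = 0"
    using AE_lborel_singleton[of 0] by (simp add: prob_eq_0 AE_std_normal_iff)
  moreover have "measure std_normal ({..0} \<union> {0..}) = 1"
  proof -
    have "{..0} \<union> {0..} = (UNIV :: real set)"
      by auto
    then show ?thesis
      using prob_space by simp
  qed
  moreover have "{..0} \<inter> {0..} = {0 :: real}"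
    by auto
  ultimately have "measure std_normal {..0} + measure std_normal {0..} = 1"
    using measure_Un3[of "{..0}" std_normal "{0..}"] by (simp add: fmeasurable_eq_sets)
  with sym show ?thesis
    unfolding Phi_def by simp
qed

lemma strict_mono_Phi: "strict_mono Phi"
proof (rule strict_monoI)
  interpret prob_space std_normal by (rule prob_space_std_normal)
  fix x y :: real
  assume "x < y"
  have "emeasure lborel {x<..y} \<noteq> 0"
    using \<open>x < y\<close> by simp
  then have "\<not> (AE t in lborel. t \<notin> {x<..y})"
    using AE_iff_null_sets[of "{x<..y}" lborel] by auto
  then have "measure std_normal {x<..y} \<noteq> 0"
    by (simp add: prob_eq_0 AE_std_normal_iff)
  moreover have "measure std_normal {..y} = measure std_normal {..x} + measure std_normal {x<..y}"
  proof -
    have "{..y} = {..x} \<union> {x<..y}"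
      using \<open>x < y\<close> by auto
    then show ?thesis
      using finite_measure_Union[of "{..x}" "{x<..y}"] by (simp add: disjoint_iff)
  qed
  ultimately show "Phi x < Phi y"
    unfolding Phi_def using measure_nonneg[of std_normal "{x<..y}"] by linarith
qed

lemma qnorm_Phi: "qnorm (Phi x) = x"
  unfolding qnorm_def using strict_mono_eq[OF strict_mono_Phi] by blast

lemma qnorm_half: "qnorm (1/2) = 0"
  using qnorm_Phi[of 0] by (simp add: Phi_0)

lemma gaussian_vec_lincomb:
  assumes "prob_space M" and "gaussian_vec M n X mu L"
  shows "integrable M (\<lambda>\<omega>. \<Sum>k<n. a k * X k \<omega>)"
    and "prob_space.expectation M (\<lambda>\<omega>. \<Sum>k<n. a k * X k \<omega>) = (\<Sum>k<n. a k * mu k)"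
proof -
  interpret prob_space M by (rule assms(1))
  define s where "s = normLT n L a"
  define c where "c = (\<Sum>k<n. a k * mu k)"
  define Y where "Y = (\<lambda>\<omega>. \<Sum>k<n. a k * X k \<omega>)"
  have "\<forall>k<n. X k \<in> borel_measurable M"
    and law: "if s > 0 then distributed M lborel Y (normal_density c s)
              else (AE \<omega> in M. Y \<omega> = c)"
    using assms(2) unfolding gaussian_vec_def s_def c_def Y_def Let_def by blast+
  then have Y_measurable: "Y \<in> borel_measurable M"
    unfolding Y_def by (auto intro!: borel_measurable_sum borel_measurable_times)
  have "integrable M Y \<and> expectation Y = c"
  proof (cases "s > 0")
    case True
    then have D: "distributed M lborel Y (normal_density c s)"
      using law by simp
    have "integrable M Y"
      using D
      by (rule distributed_integrable_var) (simp_all add: integrable_normal_moment_nz_1[OF True])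
    then show ?thesis
      using normal_distributed_expectation[OF True D] by simp
  next
    case False
    then have const: "AE \<omega> in M. Y \<omega> = c"
      using law by simp
    have "integrable M Y"
      using integrable_cong_AE[of Y M "\<lambda>_. c"] const Y_measurable by simp
    moreover have "expectation Y = expectation (\<lambda>_. c)"
      using integral_cong_AE[of Y M "\<lambda>_. c"] const Y_measurable by simp
    ultimately show ?thesis
      by (simp add: prob_space)
  qed
  then show "integrable M (\<lambda>\<omega>. \<Sum>k<n. a k * X k \<omega>)"
    and "expectation (\<lambda>\<omega>. \<Sum>k<n. a k * X k \<omega>) = (\<Sum>k<n. a k * mu k)"
    unfolding Y_def c_def by auto
qed

lemma sum_one_p_stackv: "(\<Sum>k<d+1. one_p q k * stackv v w k) = v + dotv d w q"
  by (simp add: sum.lessThan_Suc_shift one_p_def stackv_def dotv_def mult.commute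
      del: sum.lessThan_Suc)

lemma stack_apply: "stack V W k \<omega> = stackv (V \<omega>) (\<lambda>j. W j \<omega>) k"
  by (simp add: stack_def stackv_def)

lemma gaussian_vec_stack_affine:
  assumes "prob_space M" and "gaussian_vec M (d+1) (stack V W) (stackv v w) L"
  shows "integrable M (\<lambda>\<omega>. V \<omega> + (\<Sum>k<d. W k \<omega> * q k))"
    and "prob_space.expectation M (\<lambda>\<omega>. V \<omega> + (\<Sum>k<d. W k \<omega> * q k)) = v + dotv d w q"
  using gaussian_vec_lincomb[OF assms, of "one_p q"]
  unfolding stack_apply sum_one_p_stackv by (simp_all add: dotv_def)

definition mean_feasible ::
  "nat \<Rightarrow> nat \<Rightarrow> (nat \<Rightarrow> real) \<Rightarrow> (nat \<Rightarrow> nat \<Rightarrow> real) \<Rightarrow> (nat \<Rightarrow> real) \<Rightarrow> bool" where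
  "mean_feasible d m mu_c mu_gc p \<longleftrightarrow> (\<forall>i<m. 0 \<le> mu_c i + dotv d (mu_gc i) p)"

definition mean_obj ::
  "nat \<Rightarrow> (nat \<Rightarrow> nat \<Rightarrow> real) \<Rightarrow> real \<Rightarrow> (nat \<Rightarrow> real) \<Rightarrow> (nat \<Rightarrow> real) \<Rightarrow> real" where
  "mean_obj d H mu_f mu_gf p = quad d H p / 2 + dotv d mu_gf p + mu_f"

definition mean_opt ::
  "nat \<Rightarrow> nat \<Rightarrow> (nat \<Rightarrow> nat \<Rightarrow> real) \<Rightarrow> real \<Rightarrow> (nat \<Rightarrow> real) \<Rightarrow>
   (nat \<Rightarrow> real) \<Rightarrow> (nat \<Rightarrow> nat \<Rightarrow> real) \<Rightarrow> (nat \<Rightarrow> real) \<Rightarrow> bool" where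
  "mean_opt d m H mu_f mu_gf mu_c mu_gc p \<longleftrightarrow>
     mean_feasible d m mu_c mu_gc p \<and>
     (\<forall>p' \<in> vecs d. mean_feasible d m mu_c mu_gc p' \<longrightarrow>
        mean_obj d H mu_f mu_gf p \<le> mean_obj d H mu_f mu_gf p')"

lemma bsub_feasible_half_iff:
  "bsub_feasible d m Lf Lc mu_c mu_gc (1/2) p bf bc \<longleftrightarrow>
     normLT (d+1) Lf (one_p p) \<le> bf \<and> (\<forall>i<m. normLT (d+1) (Lc i) (one_p p) \<le> bc i) \<and>
     mean_feasible d m mu_c mu_gc p"
  by (auto simp: bsub_feasible_def mean_feasible_def qnorm_half)

lemma bsub_obj_half: "bsub_obj d H mu_f mu_gf (1/2) p bf = mean_obj d H mu_f mu_gf p"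
  by (simp add: bsub_obj_def mean_obj_def qnorm_half)

lemma bsub_opt_p_half_iff:
  "bsub_opt_p d m H mu_f mu_gf Lf Lc mu_c mu_gc (1/2) (1/2) p \<longleftrightarrow>
     mean_opt d m H mu_f mu_gf mu_c mu_gc p"
proof
  assume "bsub_opt_p d m H mu_f mu_gf Lf Lc mu_c mu_gc (1/2) (1/2) p"
  then obtain bf bc where feasible: "bsub_feasible d m Lf Lc mu_c mu_gc (1/2) p bf bc"
    and optimal: "\<forall>p' \<in> vecs d. \<forall>bf' bc'. bsub_feasible d m Lf Lc mu_c mu_gc (1/2) p' bf' bc' \<longrightarrow>
            bsub_obj d H mu_f mu_gf (1/2) p bf \<le> bsub_obj d H mu_f mu_gf (1/2) p' bf'"
    unfolding bsub_opt_p_def by blast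
  show "mean_opt d m H mu_f mu_gf mu_c mu_gc p"
    unfolding mean_opt_def
  proof (intro conjI ballI impI)
    show "mean_feasible d m mu_c mu_gc p"
      using feasible by (simp add: bsub_feasible_half_iff)
    fix p' assume "p' \<in> vecs d" and "mean_feasible d m mu_c mu_gc p'"
    then have "bsub_feasible d m Lf Lc mu_c mu_gc (1/2) p'
        (normLT (d+1) Lf (one_p p')) (\<lambda>i. normLT (d+1) (Lc i) (one_p p'))"
      by (simp add: bsub_feasible_half_iff)
    with optimal \<open>p' \<in> vecs d\<close> show "mean_obj d H mu_f mu_gf p \<le> mean_obj d H mu_f mu_gf p'"
      by (fastforce simp: bsub_obj_half)
  qed
next
  assume "mean_opt d m H mu_f mu_gf mu_c mu_gc p"
  then show "bsub_opt_p d m H mu_f mu_gf Lf Lc mu_c mu_gc (1/2) (1/2) p"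
    unfolding bsub_opt_p_def mean_opt_def
    by (auto simp: bsub_feasible_half_iff bsub_obj_half
        intro!: exI[of _ "normLT (d+1) Lf (one_p p)"] exI[of _ "\<lambda>i. normLT (d+1) (Lc i) (one_p p)"])
qed

lemma ev_feasible_iff_mean_feasible:
  assumes "prob_space M"
    and "\<forall>i<m. gaussian_vec M (d+1) (stack (C i) (Gc i)) (stackv (mu_c i) (mu_gc i)) (Lc i)"
  shows "ev_feasible M d m C Gc p \<longleftrightarrow> mean_feasible d m mu_c mu_gc p"
proof -
  have "\<forall>i<m. prob_space.expectation M (\<lambda>\<omega>. C i \<omega> + (\<Sum>k<d. Gc i k \<omega> * p k))
      = mu_c i + dotv d (mu_gc i) p"
    using assms(2) gaussian_vec_stack_affine(2)[OF assms(1)] by blast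
  then show ?thesis
    by (simp add: ev_feasible_def mean_feasible_def)
qed

lemma ev_obj_eq_mean_obj:
  assumes "prob_space M" and "gaussian_vec M (d+1) (stack F G) (stackv mu_f mu_gf) Lf"
  shows "ev_obj M d H F G p = mean_obj d H mu_f mu_gf p"
proof -
  interpret prob_space M by (rule assms(1))
  have "ev_obj M d H F G p =
      expectation (\<lambda>\<omega>. quad d H p / 2 + (F \<omega> + (\<Sum>k<d. G k \<omega> * p k)))"
    unfolding ev_obj_def by (simp add: algebra_simps)
  also have "\<dots> = quad d H p / 2 + expectation (\<lambda>\<omega>. F \<omega> + (\<Sum>k<d. G k \<omega> * p k))"
    using gaussian_vec_stack_affine(1)[OF assms] by (simp add: prob_space)
  also have "\<dots> = mean_obj d H mu_f mu_gf p"
    unfolding gaussian_vec_stack_affine(2)[OF assms] mean_obj_def by simp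
  finally show ?thesis .
qed

lemma ev_opt_iff_mean_opt:
  assumes "prob_space M"
    and "gaussian_vec M (d+1) (stack F G) (stackv mu_f mu_gf) Lf"
    and "\<forall>i<m. gaussian_vec M (d+1) (stack (C i) (Gc i)) (stackv (mu_c i) (mu_gc i)) (Lc i)"
  shows "ev_opt M d m H F G C Gc p \<longleftrightarrow> mean_opt d m H mu_f mu_gf mu_c mu_gc p"
  unfolding ev_opt_def mean_opt_def ev_feasible_iff_mean_feasible[OF assms(1,3)]
    ev_obj_eq_mean_obj[OF assms(1,2)] ..

theorem corollary1:
  fixes M :: "'a measure"
    and d m :: nat
    and H :: "nat \<Rightarrow> nat \<Rightarrow> real"
    and F :: "'a \<Rightarrow> real" and G :: "nat \<Rightarrow> 'a \<Rightarrow> real"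
    and mu_f :: real and mu_gf :: "nat \<Rightarrow> real" and Lf :: "nat \<Rightarrow> nat \<Rightarrow> real"
    and C :: "nat \<Rightarrow> 'a \<Rightarrow> real" and Gc :: "nat \<Rightarrow> nat \<Rightarrow> 'a \<Rightarrow> real"
    and mu_c :: "nat \<Rightarrow> real" and mu_gc :: "nat \<Rightarrow> nat \<Rightarrow> real"
    and Lc :: "nat \<Rightarrow> nat \<Rightarrow> nat \<Rightarrow> real"
    and p :: "nat \<Rightarrow> real"
  assumes "prob_space M"
    and "d \<ge> 1" and "m \<ge> 1"
    and "\<forall>i<d. \<forall>j<d. H i j = H j i"
    and "gaussian_vec M (d+1) (stack F G) (stackv mu_f mu_gf) Lf"
    and "\<forall>i<m. gaussian_vec M (d+1) (stack (C i) (Gc i)) (stackv (mu_c i) (mu_gc i)) (Lc i)"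
    and "p \<in> vecs d"
  shows "bsub_opt_p d m H mu_f mu_gf Lf Lc mu_c mu_gc (1/2) (1/2) p
         \<longleftrightarrow> ev_opt M d m H F G C Gc p"
  using bsub_opt_p_half_iff ev_opt_iff_mean_opt[OF assms(1,5,6)] by simp

end
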